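(* Let $\Sigma_A$, $\pi$, $\Pi$ be as in the context and let $\lambda$ be a symmetric Markov measure on $\Sigma_A$. If $B\subset\Sigma_A\times I$ is a bony graph relative to $\lambda$, then $\Pi(B)$ is a bi-bony graph relative to $\pi_*\lambda$. Moreover, if $B$ is continuous, then so is $\Pi(B)$.
   Context: $I=[0,1]$, $R(x)=1-x$. Given $C^1$-diffeomorphisms onto their images $f_1,\ldots,f_N$ of $I$, let $\mathcal I_P$ / $\mathcal I_R$ be the indices of orientation preserving / reversing $f_i$. $A=(a_{ij})_{i,j=1}^{2N}$ with $a_{ij}=1$ if ($i\in\mathcal I_P$, $j\le N$), or ($i\in\mathcal I_R$, $j>N$), or ($i-N\in\mathcal I_P$, $j>N$), or ($i-N\in\mathcal I_R$, $j\le N$), else $0$; $\Sigma_A$ the $A$-admissible sequences in $\{1,\ldots,2N\}^{\mathbb Z}$; $\pi\colon\Sigma_A\to\Sigma_N=\{1,\ldots,N\}^{\mathbb Z}$, $\pi(\omega)_n=\overline{\omega_n}$ ($\overline i=i$ for $i\le N$, $\overline i=i-N$ otherwise). $C=\{\omega\colon\omega_0\le N\}$; $\Pi(\omega,x)=(\pi(\omega),x)$ if $\omega\in C$, $(\pi(\omega),R(x))$ otherwise. A Markov measure on $\Sigma_A$ with probability vector $(p_i)$ and stochastic matrix $(P_{ij})$ is symmetric if $p_i=p_{i+N}$, $P_{ij}=P_{(i+N)(j+N)}$, $P_{i(j+N)}=P_{(i+N)j}$ for $i,j\le N$. For $\Sigma\in\{\Sigma_A,\Sigma_N\}$, $B\subset\Sigma\times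 I$ and $\xi\in\Sigma$, $B_\xi$ is the set of $x$ with $(\xi,x)\in B$. Relative to a Borel probability $\lambda$ on $\Sigma$, $B$ is a bony graph if $B_\xi$ is a single point for $\lambda$-a.e. $\xi$ and an interval at all remaining points; it is continuous if for every $\xi$ in the projection $\Pi_1(B)$ and $\varepsilon>0$ there is $\delta>0$ such that $\eta\in\Pi_1(B)$, $d(\eta,\xi)<\delta$ imply $B_\eta\subset U_\varepsilon(B_\xi)$. A (continuous) bi-bony graph is a union of two (continuous) bony graphs. *)

theory Defs
  imports "HOL-Analysis.Analysis" "HOL-Probability.Probability"
begin

definition unitI :: "real set" where "unitI = {0..1}"
definition refl :: "real \<Rightarrow> real" where "refl x = 1 - x"

definition C1_diffeo_onto_image :: "(real \<Rightarrow> real) \<Rightarrow> bool" where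
  "C1_diffeo_onto_image f \<longleftrightarrow>
     (\<exists>g f' g'. (\<forall>x\<in>unitI. g (f x) = x) \<and> (\<forall>y\<in>f ` unitI. f (g y) = y)
        \<and> continuous_on unitI f' \<and> (\<forall>x\<in>unitI. (f has_real_derivative f' x) (at x within unitI))
        \<and> continuous_on (f ` unitI) g'
        \<and> (\<forall>y\<in>f ` unitI. (g has_real_derivative g' y) (at y within f ` unitI)))"

definition IP :: "nat \<Rightarrow> (nat \<Rightarrow> real \<Rightarrow> real) \<Rightarrow> nat set" where
  "IP N f = {i\<in>{1..N}. \<forall>x\<in>unitI. \<forall>y\<in>unitI. x < y \<longrightarrow> f i x < f i y}"
definition IR :: "nat \<Rightarrow> (nat \<Rightarrow> real \<Rightarrow> real) \<Rightarrow> nat set" where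
  "IR N f = {i\<in>{1..N}. \<forall>x\<in>unitI. \<forall>y\<in>unitI. x < y \<longrightarrow> f i y < f i x}"

text \<open>The transition matrix A (entries 1 = True, 0 = False), indices 1..2N.\<close>
definition Amat :: "nat \<Rightarrow> (nat \<Rightarrow> real \<Rightarrow> real) \<Rightarrow> nat \<Rightarrow> nat \<Rightarrow> bool" where
  "Amat N f i j \<longleftrightarrow>
     (i \<in> IP N f \<and> j \<le> N) \<or> (i \<in> IR N f \<and> j > N) \<or>
     (i > N \<and> i - N \<in> IP N f \<and> j > N) \<or> (i > N \<and> i - N \<in> IR N f \<and> j \<le> N)"

definition SigmaA :: "nat \<Rightarrow> (nat \<Rightarrow> real \<Rightarrow> real) \<Rightarrow> (int \<Rightarrow> nat) set" where
  "SigmaA N f = {\<omega>. (\<forall>n. \<omega> n \<in> {1..2*N}) \<and> (\<forall>n. Amat N f (\<omega> n) (\<omega> (n + 1)))}"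

definition SigmaN :: "nat \<Rightarrow> (int \<Rightarrow> nat) set" where
  "SigmaN N = {\<xi>. \<forall>n. \<xi> n \<in> {1..N}}"

definition bar :: "nat \<Rightarrow> nat \<Rightarrow> nat" where
  "bar N i = (if i \<le> N then i else i - N)"

definition proj :: "nat \<Rightarrow> (int \<Rightarrow> nat) \<Rightarrow> (int \<Rightarrow> nat)" where
  "proj N \<omega> = (\<lambda>n. bar N (\<omega> n))"

definition cylC :: "nat \<Rightarrow> (int \<Rightarrow> nat) set" where
  "cylC N = {\<omega>. \<omega> 0 \<le> N}"

definition PiMap :: "nat \<Rightarrow> (int \<Rightarrow> nat) \<times> real \<Rightarrow> (int \<Rightarrow> nat) \<times> real" where
  "PiMap N = (\<lambda>(\<omega>, x). if \<omega> \<in> cylC N then (proj N \<omega>, x) else (proj N \<omega>, refl x))"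

definition seq_dist :: "(int \<Rightarrow> nat) \<Rightarrow> (int \<Rightarrow> nat) \<Rightarrow> real" where
  "seq_dist \<omega> \<eta> = (if \<omega> = \<eta> then 0
     else (1/2) ^ (LEAST k::nat. \<exists>n::int. \<bar>n\<bar> = int k \<and> \<omega> n \<noteq> \<eta> n))"

text \<open>Markov measure on Sigma_A with probability vector p and stochastic matrix P,
  as a Borel probability measure on the sequence space (supported on Sigma_A),
  determined by its values on cylinder sets.\<close>
definition markov_measure ::
  "nat \<Rightarrow> (nat \<Rightarrow> nat \<Rightarrow> bool) \<Rightarrow> (nat \<Rightarrow> real) \<Rightarrow> (nat \<Rightarrow> nat \<Rightarrow> real) \<Rightarrow> (int \<Rightarrow> nat) measure \<Rightarrow> bool" where
  "markov_measure M Adm p P lam \<longleftrightarrow>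
     sets lam = sets borel \<and> prob_space lam \<and>
     (\<forall>i\<in>{1..M}. 0 \<le> p i) \<and> (\<Sum>i\<in>{1..M}. p i) = 1 \<and>
     (\<forall>i\<in>{1..M}. \<forall>j\<in>{1..M}. 0 \<le> P i j \<and> (\<not> Adm i j \<longrightarrow> P i j = 0)) \<and>
     (\<forall>i\<in>{1..M}. (\<Sum>j\<in>{1..M}. P i j) = 1) \<and>
     (\<forall>(m::int) (k::nat) (a::nat \<Rightarrow> nat). (\<forall>j\<le>k. a j \<in> {1..M}) \<longrightarrow>
        measure lam {\<omega>. \<forall>j\<le>k. \<omega> (m + int j) = a j}
          = p (a 0) * (\<Prod>j<k. P (a j) (a (Suc j))))"

definition symmetric_markov :: "nat \<Rightarrow> (nat \<Rightarrow> real) \<Rightarrow> (nat \<Rightarrow> nat \<Rightarrow> real) \<Rightarrow> bool" where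
  "symmetric_markov N p P \<longleftrightarrow>
     (\<forall>i\<in>{1..N}. p i = p (i + N)) \<and>
     (\<forall>i\<in>{1..N}. \<forall>j\<in>{1..N}. P i j = P (i + N) (j + N) \<and> P i (j + N) = P (i + N) j)"

definition fiber :: "('s \<times> real) set \<Rightarrow> 's \<Rightarrow> real set" where
  "fiber B \<xi> = {x. (\<xi>, x) \<in> B}"

definition nbhd :: "real \<Rightarrow> real set \<Rightarrow> real set" where
  "nbhd \<epsilon> S = {x. \<exists>y\<in>S. \<bar>x - y\<bar> < \<epsilon>}"

definition bony_graph :: "(int \<Rightarrow> nat) set \<Rightarrow> (int \<Rightarrow> nat) measure \<Rightarrow> ((int \<Rightarrow> nat) \<times> real) set \<Rightarrow> bool" where
  "bony_graph S lam B \<longleftrightarrow>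
     B \<subseteq> S \<times> unitI \<and>
     (AE \<xi> in lam. \<xi> \<in> S \<longrightarrow> (\<exists>x. fiber B \<xi> = {x})) \<and>
     (\<forall>\<xi>\<in>S. is_interval (fiber B \<xi>) \<and> fiber B \<xi> \<noteq> {})"

definition graph_continuous :: "((int \<Rightarrow> nat) \<times> real) set \<Rightarrow> bool" where
  "graph_continuous B \<longleftrightarrow>
     (\<forall>\<xi>\<in>fst ` B. \<forall>\<epsilon>>0. \<exists>\<delta>>0. \<forall>\<eta>\<in>fst ` B.
        seq_dist \<eta> \<xi> < \<delta> \<longrightarrow> fiber B \<eta> \<subseteq> nbhd \<epsilon> (fiber B \<xi>))"

definition continuous_bony_graph where
  "continuous_bony_graph S lam B \<longleftrightarrow> bony_graph S lam B \<and> graph_continuous B"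

definition bi_bony_graph where
  "bi_bony_graph S lam B \<longleftrightarrow> (\<exists>B1 B2. B = B1 \<union> B2 \<and> bony_graph S lam B1 \<and> bony_graph S lam B2)"

definition continuous_bi_bony_graph where
  "continuous_bi_bony_graph S lam B \<longleftrightarrow>
     (\<exists>B1 B2. B = B1 \<union> B2 \<and> continuous_bony_graph S lam B1 \<and> continuous_bony_graph S lam B2)"

end

theory Submission
  imports Defs
begin

text \<open>Admissibility in \<open>\<Sigma>\<^sub>A\<close> says that the sheet of \<open>\<omega>\<^sub>n\<^sub>+\<^sub>1\<close> (whether it
  exceeds \<open>N\<close>) is the sheet of \<open>\<omega>\<^sub>n\<close>, switched exactly when the projected symbol
  is orientation reversing. So every \<open>\<xi> \<in> \<Sigma>\<^sub>N\<close> has exactly two admissible lifts, one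
  per sheet at time 0, and \<open>\<Pi>(B)\<close> is the union of the images of the two halves of
  \<open>B\<close>: over \<open>\<xi>\<close> their fibres are the fibre of \<open>B\<close> at the lift in \<open>C\<close>, and the
  reflected fibre at the other lift. Coordinate \<open>n\<close> of a lift only depends on \<open>\<xi>\<^sub>i\<close>
  with \<open>|i| \<le> |n|\<close>, so lifting does not increase distances, which carries continuity
  over. For the almost-everywhere part, the \<open>\<xi>\<close> with a non-degenerate fibre pull back
  under \<open>\<pi>\<close> into a \<open>\<lambda>\<close>-null set or its image under the sheet swap, and the swap
  preserves \<open>\<lambda>\<close> because the Markov measure is symmetric.\<close>

lemma C1_diffeo_strict_mono_or_antimono:
  assumes "C1_diffeo_onto_image g"
  shows "strict_mono_on unitI g \<or> strict_antimono_on unitI g"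
proof -
  obtain h g' where inv: "\<forall>x\<in>unitI. h (g x) = x"
    and deriv: "\<forall>x\<in>unitI. (g has_real_derivative g' x) (at x within unitI)"
    using assms unfolding C1_diffeo_onto_image_def by blast
  have "continuous_on unitI g"
    using deriv by (intro DERIV_continuous_on) auto
  moreover have "inj_on g unitI"
    using inv by (metis inj_on_inverseI)
  ultimately show ?thesis
    using injective_eq_monotone_map[of unitI g] by (simp add: unitI_def is_interval_cc)
qed

lemma IP_Un_IR:
  assumes "\<forall>i\<in>{1..N}. C1_diffeo_onto_image (f i)"
  shows "IP N f \<union> IR N f = {1..N}"
  using assms C1_diffeo_strict_mono_or_antimono unfolding IP_def IR_def monotone_on_def by blast

lemma IP_Int_IR: "IP N f \<inter> IR N f = {}"
proof -
  have "f i 0 < f i 1" if "i \<in> IP N f" for i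
    using that unfolding IP_def unitI_def by auto
  moreover have "f i 1 < f i 0" if "i \<in> IR N f" for i
    using that unfolding IR_def unitI_def by auto
  ultimately show ?thesis by fastforce
qed

lemma xor_recurrence_unique:
  fixes s t :: "int \<Rightarrow> bool"
  assumes "s 0 = t 0" and "\<And>n. s (n + 1) = (s n \<noteq> c n)" and "\<And>n. t (n + 1) = (t n \<noteq> c n)"
  shows "s = t"
proof
  fix n :: int
  show "s n = t n"
  proof (induction n rule: int_induct[where k = 0])
    case (step2 i)
    then show ?case using assms(2,3)[of "i - 1"] by auto
  qed (use assms in auto)
qed

definition flips :: "nat set \<Rightarrow> (int \<Rightarrow> nat) \<Rightarrow> int \<Rightarrow> nat" where
  "flips R \<xi> n = card {i \<in> {min 0 n..<max 0 n}. \<xi> i \<in> R}"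

lemma flips_0 [simp]: "flips R \<xi> 0 = 0"
  by (simp add: flips_def)

lemma odd_flips_step: "odd (flips R \<xi> (n + 1)) = (odd (flips R \<xi> n) \<noteq> (\<xi> n \<in> R))"
proof -
  define W where "W m = {i \<in> {min 0 m..<max 0 m}. \<xi> i \<in> R}" for m
  have flips_W: "flips R \<xi> m = card (W m)" for m
    by (simp add: flips_def W_def)
  have fin: "finite (W m)" for m
    unfolding W_def by (rule finite_subset[of _ "{min 0 m..<max 0 m}"]) auto
  have "W (n + 1) = (if \<xi> n \<in> R then insert n (W n) else W n) \<and> n \<notin> W n
      \<or> W n = (if \<xi> n \<in> R then insert n (W (n + 1)) else W (n + 1)) \<and> n \<notin> W (n + 1)"
    unfolding W_def by (cases "0 \<le> n") (auto simp: le_less)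
  then show ?thesis
    unfolding flips_W using fin by (auto split: if_splits)
qed

lemma flips_cong:
  assumes "\<forall>i. \<bar>i\<bar> \<le> \<bar>n\<bar> \<longrightarrow> \<xi> i = \<eta> i"
  shows "flips R \<xi> n = flips R \<eta> n"
proof -
  have "{i \<in> {min 0 n..<max 0 n}. \<xi> i \<in> R} = {i \<in> {min 0 n..<max 0 n}. \<eta> i \<in> R}"
    using assms by auto
  then show ?thesis by (simp add: flips_def)
qed

text \<open>The admissible lift of \<open>\<xi>\<close> with sheet \<open>b\<close> at time 0: the sheet switches after
  every symbol in \<open>R\<close>.\<close>

definition lift :: "nat \<Rightarrow> nat set \<Rightarrow> bool \<Rightarrow> (int \<Rightarrow> nat) \<Rightarrow> int \<Rightarrow> nat" where
  "lift N R b \<xi> n = (if b \<noteq> odd (flips R \<xi> n) then \<xi> n + N else \<xi> n)"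

lemma lift_cong:
  assumes "\<forall>i. \<bar>i\<bar> \<le> \<bar>n\<bar> \<longrightarrow> \<xi> i = \<eta> i"
  shows "lift N R b \<xi> n = lift N R b \<eta> n"
  using assms flips_cong[OF assms] unfolding lift_def by simp

lemma proj_lift:
  assumes "\<xi> \<in> SigmaN N"
  shows "proj N (lift N R b \<xi>) = \<xi>"
proof
  fix n
  have "\<xi> n \<in> {1..N}"
    using assms by (simp add: SigmaN_def)
  then show "proj N (lift N R b \<xi>) n = \<xi> n"
    by (simp add: proj_def lift_def bar_def)
qed

lemma upper_lift_iff:
  assumes "\<xi> \<in> SigmaN N"
  shows "(N < lift N R b \<xi> n) = (b \<noteq> odd (flips R \<xi> n))"
  using assms unfolding SigmaN_def lift_def by (auto dest: spec[of _ n])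

lemma upper_lift_0: "\<xi> \<in> SigmaN N \<Longrightarrow> (N < lift N R b \<xi> 0) = b"
  by (simp add: upper_lift_iff)

definition twin :: "nat \<Rightarrow> nat \<Rightarrow> nat" where
  "twin N i = (if i \<le> N then i + N else i - N)"

lemma twin_lift:
  assumes "\<xi> \<in> SigmaN N"
  shows "twin N (lift N R b \<xi> n) = lift N R (\<not> b) \<xi> n"
  using assms unfolding SigmaN_def lift_def twin_def by (auto dest: spec[of _ n])

lemma proj_SigmaN:
  assumes "\<omega> \<in> SigmaA N f"
  shows "proj N \<omega> \<in> SigmaN N"
proof -
  have "bar N (\<omega> n) \<in> {1..N}" for n
    using assms unfolding SigmaA_def bar_def by (auto dest: spec[of _ n])
  then show ?thesis
    by (simp add: SigmaN_def proj_def)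
qed

context
  fixes N :: nat and f :: "nat \<Rightarrow> real \<Rightarrow> real"
  assumes cover: "IP N f \<union> IR N f = {1..N}"
begin

lemma Amat_iff:
  assumes "i \<in> {1..2*N}"
  shows "Amat N f i j \<longleftrightarrow> ((N < j) \<longleftrightarrow> ((N < i) \<noteq> (bar N i \<in> IR N f)))"
proof -
  have "bar N i \<in> {1..N}"
    using assms unfolding bar_def by auto
  then have "bar N i \<in> IP N f \<longleftrightarrow> bar N i \<notin> IR N f"
    using cover IP_Int_IR by blast
  moreover have "IP N f \<subseteq> {1..N}" "IR N f \<subseteq> {1..N}"
    using cover by auto
  ultimately show ?thesis
    unfolding Amat_def bar_def by (auto split: if_splits)
qed

lemma SigmaA_iff:
  "\<omega> \<in> SigmaA N f \<longleftrightarrow> (\<forall>n. \<omega> n \<in> {1..2*N}) \<and>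
     (\<forall>n. (N < \<omega> (n + 1)) = ((N < \<omega> n) \<noteq> (proj N \<omega> n \<in> IR N f)))"
  unfolding SigmaA_def proj_def using Amat_iff by auto

lemma lift_SigmaA:
  assumes "\<xi> \<in> SigmaN N"
  shows "lift N (IR N f) b \<xi> \<in> SigmaA N f"
proof -
  have "lift N (IR N f) b \<xi> n \<in> {1..2*N}" for n
    using assms unfolding SigmaN_def lift_def by (auto dest: spec[of _ n])
  then show ?thesis
    unfolding SigmaA_iff proj_lift[OF assms] upper_lift_iff[OF assms] odd_flips_step by auto
qed

lemma lift_proj:
  assumes "\<omega> \<in> SigmaA N f"
  shows "lift N (IR N f) (N < \<omega> 0) (proj N \<omega>) = \<omega>"
proof
  fix n
  have "(\<lambda>n. N < \<omega> n) = (\<lambda>n. (N < \<omega> 0) \<noteq> odd (flips (IR N f) (proj N \<omega>) n))"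
    by (rule xor_recurrence_unique) (use assms in \<open>auto simp: SigmaA_iff odd_flips_step\<close>)
  moreover have "\<omega> n \<in> {1..2*N}"
    using assms by (simp add: SigmaA_iff)
  ultimately show "lift N (IR N f) (N < \<omega> 0) (proj N \<omega>) n = \<omega> n"
    unfolding lift_def proj_def bar_def by (auto dest: fun_cong[of _ _ n])
qed

lemma lift_proj_cases:
  assumes "\<omega> \<in> SigmaA N f"
  shows "lift N (IR N f) b (proj N \<omega>) \<in> {\<omega>, \<lambda>n. twin N (\<omega> n)}"
proof (cases "b = (N < \<omega> 0)")
  case False
  have "lift N (IR N f) b (proj N \<omega>) n = twin N (\<omega> n)" for n
    using twin_lift[OF proj_SigmaN[OF assms], of "IR N f" "N < \<omega> 0" n] False
    by (simp add: lift_proj[OF assms])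
  then show ?thesis by auto
qed (simp add: lift_proj[OF assms])

end

lemma open_finitely_determined:
  fixes U :: "('a \<Rightarrow> 'b::discrete_topology) set"
  assumes "finite K" and "\<And>\<xi> \<eta>. \<forall>n\<in>K. \<xi> n = \<eta> n \<Longrightarrow> \<xi> \<in> U \<Longrightarrow> \<eta> \<in> U"
  shows "open U"
proof -
  have cylinder_open: "open {\<eta>. \<forall>n\<in>K. \<eta> n = \<xi> n}" for \<xi> :: "'a \<Rightarrow> 'b"
  proof -
    have "{\<eta>. \<forall>n\<in>K. \<eta> n = \<xi> n} = (\<Inter>n\<in>K. (\<lambda>\<eta>. \<eta> n) -` {\<xi> n})"
      by auto
    moreover have "open ((\<lambda>\<eta>::'a \<Rightarrow> 'b. \<eta> n) -` {\<xi> n})" for n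
      by (rule open_vimage[OF discrete_topology_class.open_discrete continuous_on_product_coordinates])
    ultimately show ?thesis
      using assms(1) by (simp add: open_INT)
  qed
  have "U = (\<Union>\<xi>\<in>U. {\<eta>. \<forall>n\<in>K. \<eta> n = \<xi> n})"
  proof (intro equalityI subsetI)
    fix \<eta> assume "\<eta> \<in> (\<Union>\<xi>\<in>U. {\<eta>. \<forall>n\<in>K. \<eta> n = \<xi> n})"
    then obtain \<xi> where "\<xi> \<in> U" "\<forall>n\<in>K. \<xi> n = \<eta> n"
      by auto
    then show "\<eta> \<in> U"
      using assms(2) by blast
  qed auto
  also have "open \<dots>"
    using cylinder_open by (rule open_UN[OF ballI])
  finally show ?thesis .
qed

lemma borel_measurable_finitely_determined:
  fixes F :: "('a \<Rightarrow> 'b::discrete_topology) \<Rightarrow> 'c \<Rightarrow> 'd::topological_space"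
  assumes "\<And>n. \<exists>K. finite K \<and> (\<forall>\<xi> \<eta>. (\<forall>i\<in>K. \<xi> i = \<eta> i) \<longrightarrow> F \<xi> n = F \<eta> n)"
  shows "F \<in> borel_measurable borel"
proof (intro borel_measurable_continuous_onI continuous_on_coordinatewise_then_product)
  fix n
  obtain K where "finite K" and K: "\<forall>\<xi> \<eta>. (\<forall>i\<in>K. \<xi> i = \<eta> i) \<longrightarrow> F \<xi> n = F \<eta> n"
    using assms by blast
  have "open ((\<lambda>\<xi>. F \<xi> n) -` V)" for V
    by (rule open_finitely_determined[OF \<open>finite K\<close>]) (use K in fastforce)
  then show "continuous_on UNIV (\<lambda>\<xi>. F \<xi> n)"
    by (simp add: continuous_on_open_vimage)
qed

lemma borel_measurable_map_symbols:
  fixes h :: "'b::discrete_topology \<Rightarrow> 'd::topological_space"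
  shows "(\<lambda>\<omega> n. h (\<omega> n)) \<in> borel_measurable borel"
proof (rule borel_measurable_finitely_determined)
  fix n
  show "\<exists>K. finite K \<and> (\<forall>\<xi> \<eta>. (\<forall>i\<in>K. \<xi> i = \<eta> i) \<longrightarrow> h (\<xi> n) = h (\<eta> n))"
    by (intro exI[of _ "{n}"]) auto
qed

lemma borel_measurable_proj: "proj N \<in> borel_measurable borel"
  unfolding proj_def by (rule borel_measurable_map_symbols)

lemma borel_measurable_lift: "lift N R b \<in> borel_measurable borel"
proof (rule borel_measurable_finitely_determined)
  fix n :: int
  show "\<exists>K. finite K \<and> (\<forall>\<xi> \<eta>. (\<forall>i\<in>K. \<xi> i = \<eta> i) \<longrightarrow> lift N R b \<xi> n = lift N R b \<eta> n)"
  proof (intro exI[of _ "{-\<bar>n\<bar>..\<bar>n\<bar>}"] conjI allI impI lift_cong)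
    fix \<xi> \<eta> :: "int \<Rightarrow> nat" and i :: int
    assume "\<forall>i\<in>{-\<bar>n\<bar>..\<bar>n\<bar>}. \<xi> i = \<eta> i" and "\<bar>i\<bar> \<le> \<bar>n\<bar>"
    then show "\<xi> i = \<eta> i"
      by (metis abs_le_D1 abs_le_D2 atLeastAtMost_iff minus_le_iff)
  qed simp
qed

lemma seq_dist_nonexpanding:
  assumes causal: "\<And>\<xi> \<eta> n. \<forall>i. \<bar>i\<bar> \<le> \<bar>n\<bar> \<longrightarrow> \<xi> i = \<eta> i \<Longrightarrow> F \<xi> n = F \<eta> n"
  shows "seq_dist (F \<eta>) (F \<xi>) \<le> seq_dist \<eta> \<xi>"
proof (cases "F \<eta> = F \<xi>")
  case False
  define k' where "k' = (LEAST k::nat. \<exists>n. \<bar>n\<bar> = int k \<and> F \<eta> n \<noteq> F \<xi> n)"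
  obtain n0 where "F \<eta> n0 \<noteq> F \<xi> n0"
    using False by auto
  then have "\<exists>k::nat. \<exists>n. \<bar>n\<bar> = int k \<and> F \<eta> n \<noteq> F \<xi> n"
    by (intro exI[of _ "nat \<bar>n0\<bar>"] exI[of _ n0]) simp
  from LeastI_ex[OF this] obtain n where n: "\<bar>n\<bar> = int k'" "F \<eta> n \<noteq> F \<xi> n"
    unfolding k'_def by blast
  obtain i where i: "\<bar>i\<bar> \<le> \<bar>n\<bar>" "\<eta> i \<noteq> \<xi> i"
    using causal n(2) by blast
  have "(LEAST k::nat. \<exists>n. \<bar>n\<bar> = int k \<and> \<eta> n \<noteq> \<xi> n) \<le> k'"
    using i n(1) by (intro Least_le[THEN order_trans, of _ "nat \<bar>i\<bar>"]) auto
  then show ?thesis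
    using False i(2) unfolding seq_dist_def k'_def by (auto intro: power_decreasing)
qed (simp add: seq_dist_def)

lemma seq_dist_lift: "seq_dist (lift N R b \<eta>) (lift N R b \<xi>) \<le> seq_dist \<eta> \<xi>"
  by (rule seq_dist_nonexpanding) (rule lift_cong)

lemma finite_cylinder_as_window:
  fixes J :: "int set" and A :: "int \<Rightarrow> 'a set"
  assumes "finite J"
  obtains m k X where "\<And>\<omega>. (\<forall>j\<in>J. \<omega> j \<in> A j) \<longleftrightarrow> (\<forall>l\<le>k. \<omega> (m + int l) \<in> X l)"
proof -
  obtain r where r: "\<forall>j\<in>J. nat \<bar>j\<bar> \<le> r"
    using assms finite_nat_set_iff_bounded_le[of "(\<lambda>j. nat \<bar>j\<bar>) ` J"] by auto
  define X where "X l = (if - int r + int l \<in> J then A (- int r + int l) else UNIV)" for l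
  have "(\<forall>j\<in>J. \<omega> j \<in> A j) \<longleftrightarrow> (\<forall>l\<le>2 * r. \<omega> (- int r + int l) \<in> X l)" for \<omega> :: "int \<Rightarrow> 'a"
  proof
    assume "\<forall>j\<in>J. \<omega> j \<in> A j"
    then show "\<forall>l\<le>2 * r. \<omega> (- int r + int l) \<in> X l"
      by (simp add: X_def)
  next
    assume window: "\<forall>l\<le>2 * r. \<omega> (- int r + int l) \<in> X l"
    show "\<forall>j\<in>J. \<omega> j \<in> A j"
    proof
      fix j
      assume "j \<in> J"
      with r have "nat (j + int r) \<le> 2 * r" "- int r + int (nat (j + int r)) = j"
        by auto
      with window \<open>j \<in> J\<close> show "\<omega> j \<in> A j"
        by (metis X_def)
    qed
  qed
  then show ?thesis
    using that by blast
qed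

definition cylinder :: "int \<Rightarrow> nat \<Rightarrow> (nat \<Rightarrow> 'a) \<Rightarrow> (int \<Rightarrow> 'a) set" where
  "cylinder m k a = {\<omega>. \<forall>j\<le>k. \<omega> (m + int j) = a j}"

lemma window_eq_Union_cylinders:
  assumes "\<forall>j\<le>k. \<omega> (m + int j) \<in> S"
  shows "(\<forall>j\<le>k. \<omega> (m + int j) \<in> X j) \<longleftrightarrow> \<omega> \<in> (\<Union>a\<in>(\<Pi>\<^sub>E j\<in>{..k}. X j \<inter> S). cylinder m k a)"
proof
  assume "\<forall>j\<le>k. \<omega> (m + int j) \<in> X j"
  then have "(\<lambda>j\<in>{..k}. \<omega> (m + int j)) \<in> (\<Pi>\<^sub>E j\<in>{..k}. X j \<inter> S)"
    using assms by auto
  moreover have "\<omega> \<in> cylinder m k (\<lambda>j\<in>{..k}. \<omega> (m + int j))"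
    by (simp add: cylinder_def)
  ultimately show "\<omega> \<in> (\<Union>a\<in>(\<Pi>\<^sub>E j\<in>{..k}. X j \<inter> S). cylinder m k a)"
    by blast
qed (auto simp: cylinder_def PiE_iff)

lemma disjoint_family_on_cylinder: "disjoint_family_on (cylinder m k) (\<Pi>\<^sub>E j\<in>{..k}. Y j)"
  unfolding disjoint_family_on_def
proof (intro ballI impI)
  fix a b
  assume "a \<in> (\<Pi>\<^sub>E j\<in>{..k}. Y j)" "b \<in> (\<Pi>\<^sub>E j\<in>{..k}. Y j)" "a \<noteq> b"
  then obtain j where "j \<le> k" "a j \<noteq> b j"
    using PiE_ext by blast
  then show "cylinder m k a \<inter> cylinder m k b = {}"
    by (auto simp: cylinder_def)
qed

context
  fixes M :: nat and Adm :: "nat \<Rightarrow> nat \<Rightarrow> bool" and p :: "nat \<Rightarrow> real"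
    and P :: "nat \<Rightarrow> nat \<Rightarrow> real" and lam :: "(int \<Rightarrow> nat) measure"
  assumes markov: "markov_measure M Adm p P lam"
begin

lemma sets_markov: "sets lam = sets borel"
  using markov by (simp add: markov_measure_def)

lemma space_markov: "space lam = UNIV"
  using sets_eq_imp_space_eq[OF sets_markov] by simp

lemma prob_space_markov: "prob_space lam"
  using markov by (simp add: markov_measure_def)

lemma emeasure_markov: "emeasure lam A = ennreal (measure lam A)"
  using prob_space.finite_measure[OF prob_space_markov] by (rule finite_measure.emeasure_eq_measure)

lemma measurable_markov: "g \<in> borel_measurable borel \<Longrightarrow> g \<in> borel_measurable lam"
  by (simp add: measurable_cong_sets[OF sets_markov refl])

lemma finitely_determined_in_sets_markov:
  assumes "finite K" and "\<And>\<xi> \<eta>. \<forall>n\<in>K. \<xi> n = \<eta> n \<Longrightarrow> \<xi> \<in> U \<Longrightarrow> \<eta> \<in> U"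
  shows "U \<in> sets lam"
  using borel_open[OF open_finitely_determined[OF assms]] by (simp add: sets_markov)

lemma measure_markov_cylinder:
  assumes "\<forall>j\<le>k. a j \<in> {1..M}"
  shows "measure lam (cylinder m k a) = p (a 0) * (\<Prod>j<k. P (a j) (a (Suc j)))"
  using markov assms unfolding markov_measure_def cylinder_def by blast

lemma AE_markov_symbol: "AE \<omega> in lam. \<omega> n \<in> {1..M}"
proof -
  have point_sets: "{\<omega>. \<omega> n = i} \<in> sets lam" for i
    by (rule finitely_determined_in_sets_markov[of "{n}"]) auto
  have point_measure: "measure lam {\<omega>. \<omega> n = i} = p i" if "i \<in> {1..M}" for i
    using measure_markov_cylinder[of 0 "\<lambda>_. i" n] that by (simp add: cylinder_def)
  have "measure lam {\<omega>. \<omega> n \<in> {1..M}} = measure lam (\<Union>i\<in>{1..M}. {\<omega>. \<omega> n = i})"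
    by (rule arg_cong[where f = "measure lam"]) auto
  also have "\<dots> = (\<Sum>i\<in>{1..M}. measure lam {\<omega>. \<omega> n = i})"
    using point_sets emeasure_markov
    by (intro measure_finite_Union) (auto simp: disjoint_family_on_def)
  also have "\<dots> = 1"
    using point_measure markov by (simp add: markov_measure_def)
  finally have "AE \<omega> in lam. \<omega> \<in> {\<omega>. \<omega> n \<in> {1..M}}"
    by (rule prob_space.AE_prob_1[OF prob_space_markov])
  then show ?thesis
    by simp
qed

lemma AE_markov_admissible: "AE \<omega> in lam. (\<forall>n. \<omega> n \<in> {1..M}) \<and> (\<forall>n. Adm (\<omega> n) (\<omega> (n + 1)))"
proof -
  have inadmissible_null: "{\<omega>. \<omega> n = i \<and> \<omega> (n + 1) = j} \<in> null_sets lam"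
    if "i \<in> {1..M}" "j \<in> {1..M}" "\<not> Adm i j" for n i j
  proof -
    let ?a = "\<lambda>l::nat. if l = 0 then i else j"
    have "{\<omega>. \<omega> n = i \<and> \<omega> (n + 1) = j} = cylinder n 1 ?a"
      by (auto simp: cylinder_def le_Suc_eq)
    moreover have "measure lam (cylinder n 1 ?a) = p i * P i j"
      using measure_markov_cylinder[of 1 ?a n] that by simp
    moreover have "P i j = 0"
      using markov that unfolding markov_measure_def by blast
    moreover have "{\<omega>. \<omega> n = i \<and> \<omega> (n + 1) = j} \<in> sets lam"
      by (rule finitely_determined_in_sets_markov[of "{n, n + 1}"]) auto
    ultimately show ?thesis
      by (simp add: null_sets_def emeasure_markov)
  qed
  have "AE \<omega> in lam. \<forall>i\<in>{1..M}. \<forall>j\<in>{1..M}. \<not> Adm i j \<longrightarrow> \<not> (\<omega> n = i \<and> \<omega> (n + 1) = j)"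
    for n
  proof (intro AE_finite_allI finite_atLeastAtMost AE_impI)
    fix i j
    assume "i \<in> {1..M}" "j \<in> {1..M}" "\<not> Adm i j"
    from AE_not_in[OF inadmissible_null[OF this, of n]]
    show "AE \<omega> in lam. \<not> (\<omega> n = i \<and> \<omega> (n + 1) = j)"
      by simp
  qed
  then have "AE \<omega> in lam. \<forall>n. \<forall>i\<in>{1..M}. \<forall>j\<in>{1..M}. \<not> Adm i j \<longrightarrow> \<not> (\<omega> n = i \<and> \<omega> (n + 1) = j)"
    by (simp only: AE_all_countable) blast
  moreover have "AE \<omega> in lam. \<forall>n. \<omega> n \<in> {1..M}"
    by (simp only: AE_all_countable) (blast intro: AE_markov_symbol)
  ultimately show ?thesis
    by eventually_elim blast
qed

lemma measure_markov_window:
  "measure lam {\<omega>. \<forall>j\<le>k. \<omega> (m + int j) \<in> X j}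
     = (\<Sum>a\<in>(\<Pi>\<^sub>E j\<in>{..k}. X j \<inter> {1..M}). p (a 0) * (\<Prod>j<k. P (a j) (a (Suc j))))"
proof -
  define W where "W = (\<Pi>\<^sub>E j\<in>{..k}. X j \<inter> {1..M})"
  have window_sets: "{\<omega>. \<forall>j\<le>k. \<omega> (m + int j) \<in> Y j} \<in> sets lam" for Y
    by (rule finitely_determined_in_sets_markov[of "(\<lambda>j. m + int j) ` {..k}"]) auto
  have cylinder_sets: "cylinder m k a \<in> sets lam" for a
    using window_sets[of "\<lambda>j. {a j}"] by (simp add: cylinder_def)
  have "finite W"
    unfolding W_def by (intro finite_PiE) auto
  have "AE \<omega> in lam. \<forall>n. \<omega> n \<in> {1..M}"
    by (simp only: AE_all_countable) (blast intro: AE_markov_symbol)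
  then have "AE \<omega> in lam. \<omega> \<in> {\<omega>. \<forall>j\<le>k. \<omega> (m + int j) \<in> X j} \<longleftrightarrow> \<omega> \<in> (\<Union>a\<in>W. cylinder m k a)"
    unfolding W_def mem_Collect_eq by eventually_elim (rule window_eq_Union_cylinders, blast)
  then have "measure lam {\<omega>. \<forall>j\<le>k. \<omega> (m + int j) \<in> X j} = measure lam (\<Union>a\<in>W. cylinder m k a)"
    by (rule measure_eq_AE) (use window_sets cylinder_sets \<open>finite W\<close> in blast)+
  also have "\<dots> = (\<Sum>a\<in>W. measure lam (cylinder m k a))"
    using cylinder_sets emeasure_markov \<open>finite W\<close> disjoint_family_on_cylinder
    by (intro measure_finite_Union) (auto simp: W_def)
  also have "\<dots> = (\<Sum>a\<in>W. p (a 0) * (\<Prod>j<k. P (a j) (a (Suc j))))"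
    by (intro sum.cong refl measure_markov_cylinder) (auto simp: W_def PiE_iff)
  finally show ?thesis
    unfolding W_def .

qed

context
  fixes \<tau> :: "nat \<Rightarrow> nat"
  assumes \<tau>_involution: "\<And>i. i \<in> {1..M} \<Longrightarrow> \<tau> i \<in> {1..M} \<and> \<tau> (\<tau> i) = i"
    and p_\<tau>: "\<And>i. i \<in> {1..M} \<Longrightarrow> p (\<tau> i) = p i"
    and P_\<tau>: "\<And>i j. i \<in> {1..M} \<Longrightarrow> j \<in> {1..M} \<Longrightarrow> P (\<tau> i) (\<tau> j) = P i j"
begin

lemma measure_markov_window_map_symbols:
  "measure lam {\<omega>. \<forall>j\<le>k. \<tau> (\<omega> (m + int j)) \<in> X j} = measure lam {\<omega>. \<forall>j\<le>k. \<omega> (m + int j) \<in> X j}"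
proof -
  define w where "w a = p (a 0) * (\<Prod>j<k. P (a j) (a (Suc j)))" for a :: "nat \<Rightarrow> nat"
  define h where "h a = (\<lambda>j\<in>{..k}. \<tau> (a j))" for a :: "nat \<Rightarrow> nat"
  have "(\<Sum>a\<in>(\<Pi>\<^sub>E j\<in>{..k}. \<tau> -` X j \<inter> {1..M}). w a) = (\<Sum>a\<in>(\<Pi>\<^sub>E j\<in>{..k}. X j \<inter> {1..M}). w a)"
  proof (rule sum.reindex_bij_witness[where i = h and j = h])
    fix a
    assume a: "a \<in> (\<Pi>\<^sub>E j\<in>{..k}. \<tau> -` X j \<inter> {1..M})"
    then have a_range: "a j \<in> {1..M}" if "j \<le> k" for j
      using that by (auto simp: PiE_iff)
    show "h (h a) = a"
      using a \<tau>_involution by (auto simp: h_def PiE_iff extensional_def)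
    show "h a \<in> (\<Pi>\<^sub>E j\<in>{..k}. X j \<inter> {1..M})"
      using a \<tau>_involution by (auto simp: h_def PiE_iff)
    show "w (h a) = w a"
      using a_range by (simp add: w_def h_def p_\<tau> P_\<tau>)
  next
    fix b
    assume b: "b \<in> (\<Pi>\<^sub>E j\<in>{..k}. X j \<inter> {1..M})"
    show "h (h b) = b"
      using b \<tau>_involution by (auto simp: h_def PiE_iff extensional_def)
    show "h b \<in> (\<Pi>\<^sub>E j\<in>{..k}. \<tau> -` X j \<inter> {1..M})"
      using b \<tau>_involution by (auto simp: h_def PiE_iff)
  qed
  then show ?thesis
    using measure_markov_window[of k m X] measure_markov_window[of k m "\<lambda>j. \<tau> -` X j"]
    by (simp add: w_def)
qed

lemma distr_markov_map_symbols: "distr lam borel (\<lambda>\<omega> n. \<tau> (\<omega> n)) = lam"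
proof (rule measure_eqI_PiM_infinite[where I = UNIV and M = "\<lambda>_. borel"])
  have measurable: "(\<lambda>\<omega> n. \<tau> (\<omega> n)) \<in> borel_measurable lam"
    by (rule measurable_markov[OF borel_measurable_map_symbols])
  show "sets (distr lam borel (\<lambda>\<omega> n. \<tau> (\<omega> n))) = sets (Pi\<^sub>M UNIV (\<lambda>_. borel))"
    by (simp add: sets_PiM_equal_borel)
  show "sets lam = sets (Pi\<^sub>M UNIV (\<lambda>_. borel))"
    by (simp add: sets_PiM_equal_borel sets_markov)
  show "finite_measure (distr lam borel (\<lambda>\<omega> n. \<tau> (\<omega> n)))"
    using prob_space.prob_space_distr[OF prob_space_markov measurable] by (rule prob_space.finite_measure)
  fix A :: "int \<Rightarrow> nat set" and J :: "int set"
  assume "finite J"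
  have cylinder: "prod_emb UNIV (\<lambda>_. borel) J (Pi\<^sub>E J A) = {\<omega>. \<forall>j\<in>J. \<omega> j \<in> A j}"
    by (auto simp: prod_emb_def restrict_PiE_iff)
  have "{\<omega>. \<forall>j\<in>J. \<omega> j \<in> A j} \<in> sets borel"
    by (rule borel_open[OF open_finitely_determined[OF \<open>finite J\<close>]]) auto
  then have "emeasure (distr lam borel (\<lambda>\<omega> n. \<tau> (\<omega> n))) {\<omega>. \<forall>j\<in>J. \<omega> j \<in> A j}
      = emeasure lam {\<omega>. \<forall>j\<in>J. \<tau> (\<omega> j) \<in> A j}"
    by (simp add: emeasure_distr[OF measurable] space_markov)
  also obtain m k X where "\<And>\<omega> :: int \<Rightarrow> nat. (\<forall>j\<in>J. \<omega> j \<in> A j) \<longleftrightarrow> (\<forall>l\<le>k. \<omega> (m + int l) \<in> X l)"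
    using finite_cylinder_as_window[OF \<open>finite J\<close>] by metis
  then have "emeasure lam {\<omega>. \<forall>j\<in>J. \<tau> (\<omega> j) \<in> A j} = emeasure lam {\<omega>. \<forall>j\<in>J. \<omega> j \<in> A j}"
    by (simp add: emeasure_markov measure_markov_window_map_symbols)
  finally show "emeasure (distr lam borel (\<lambda>\<omega> n. \<tau> (\<omega> n))) (prod_emb UNIV (\<lambda>_. borel) J (Pi\<^sub>E J A))
      = emeasure lam (prod_emb UNIV (\<lambda>_. borel) J (Pi\<^sub>E J A))"
    unfolding cylinder .
qed

lemma null_sets_markov_map_symbols:
  assumes "E \<in> null_sets lam"
  shows "(\<lambda>\<omega> n. \<tau> (\<omega> n)) -` E \<in> null_sets lam"
proof -
  have "(\<lambda>\<omega> n. \<tau> (\<omega> n)) \<in> borel_measurable lam"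
    by (rule measurable_markov[OF borel_measurable_map_symbols])
  then show ?thesis
    using assms null_sets_distr_iff[of "\<lambda>\<omega> n. \<tau> (\<omega> n)" lam borel E]
    by (simp add: distr_markov_map_symbols space_markov)
qed

end

end

lemma symmetric_markov_twin:
  assumes "symmetric_markov N p P" and "i \<in> {1..2*N}"
  shows "twin N i \<in> {1..2*N} \<and> twin N (twin N i) = i" and "p (twin N i) = p i"
    and "j \<in> {1..2*N} \<Longrightarrow> P (twin N i) (twin N j) = P i j"
proof -
  have sheets: "\<exists>a\<in>{1..N}. k = a \<or> k = a + N" if "k \<in> {1..2*N}" for k
    using that by (cases "k \<le> N") (auto intro!: bexI[of _ "k - N"])
  have p_eq: "p a = p (a + N)" if "a \<in> {1..N}" for a
    using assms(1) that unfolding symmetric_markov_def by auto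
  have P_eq: "P a b = P (a + N) (b + N)" "P a (b + N) = P (a + N) b"
    if "a \<in> {1..N}" "b \<in> {1..N}" for a b
    using assms(1) that unfolding symmetric_markov_def by auto
  show "twin N i \<in> {1..2*N} \<and> twin N (twin N i) = i"
    using assms(2) by (auto simp: twin_def)
  obtain a where a: "a \<in> {1..N}" "i = a \<or> i = a + N"
    using sheets[OF assms(2)] by blast
  show "p (twin N i) = p i"
    using a p_eq[of a] by (auto simp: twin_def)
  show "P (twin N i) (twin N j) = P i j" if j: "j \<in> {1..2*N}"
  proof -
    obtain b where b: "b \<in> {1..N}" "j = b \<or> j = b + N"
      using sheets[OF j] by blast
    then show ?thesis
      using a P_eq[of a b] by (auto simp: twin_def)
  qed
qed

lemma null_sets_distr_proj_lift:
  assumes cover: "IP N f \<union> IR N f = {1..N}"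
    and markov: "markov_measure (2 * N) (Amat N f) p P lam"
    and symmetric: "symmetric_markov N p P"
    and null: "E \<in> null_sets lam"
  shows "lift N (IR N f) b -` E \<in> null_sets (distr lam borel (proj N))"
proof -
  have proj_measurable: "proj N \<in> borel_measurable lam"
    by (rule measurable_markov[OF markov borel_measurable_proj])
  have lift_preimage: "lift N (IR N f) b -` E \<in> sets borel"
    using measurable_sets[OF borel_measurable_lift, of E] null sets_markov[OF markov] by auto
  have "AE \<omega> in lam. \<omega> \<in> SigmaA N f"
    using AE_markov_admissible[OF markov] by (simp add: SigmaA_def)
  then obtain Z where Z: "{\<omega> \<in> space lam. \<omega> \<notin> SigmaA N f} \<subseteq> Z" "emeasure lam Z = 0" "Z \<in> sets lam"
    by (rule AE_E)
  have twin_null: "(\<lambda>\<omega> n. twin N (\<omega> n)) -` E \<in> null_sets lam"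
  proof (rule null_sets_markov_map_symbols[OF markov _ _ _ null])
    fix i j
    assume "i \<in> {1..2*N}"
    then show "twin N i \<in> {1..2*N} \<and> twin N (twin N i) = i" "p (twin N i) = p i"
      and "j \<in> {1..2*N} \<Longrightarrow> P (twin N i) (twin N j) = P i j"
      using symmetric_markov_twin[OF symmetric] by blast+
  qed
  have "proj N -` (lift N (IR N f) b -` E) \<subseteq> E \<union> (\<lambda>\<omega> n. twin N (\<omega> n)) -` E \<union> Z"
  proof
    fix \<omega>
    assume "\<omega> \<in> proj N -` (lift N (IR N f) b -` E)"
    moreover have "\<omega> \<in> Z" if "\<omega> \<notin> SigmaA N f"
      using that Z(1) by (auto simp: space_markov[OF markov])
    ultimately show "\<omega> \<in> E \<union> (\<lambda>\<omega> n. twin N (\<omega> n)) -` E \<union> Z"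
      using lift_proj_cases[OF cover, of \<omega> b] by (cases "\<omega> \<in> SigmaA N f") auto
  qed
  moreover have "proj N -` (lift N (IR N f) b -` E) \<in> sets lam"
    using measurable_sets[OF proj_measurable lift_preimage] by (simp add: space_markov[OF markov])
  ultimately have "proj N -` (lift N (IR N f) b -` E) \<in> null_sets lam"
    using null twin_null Z(2,3) by (metis null_setsI null_sets.Un null_sets_subset)
  then show ?thesis
    using null_sets_distr_iff[OF proj_measurable] lift_preimage by (simp add: space_markov[OF markov])
qed

definition reflect_if :: "bool \<Rightarrow> real \<Rightarrow> real" where
  "reflect_if b = (if b then refl else id)"

lemma reflect_if_isometry: "\<bar>reflect_if b x - reflect_if b y\<bar> = \<bar>x - y\<bar>"
  by (simp add: reflect_if_def refl_def abs_minus_commute)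

lemma reflect_if_unitI: "x \<in> unitI \<Longrightarrow> reflect_if b x \<in> unitI"
  by (simp add: reflect_if_def refl_def unitI_def)

lemma is_interval_reflect_if_image:
  assumes "is_interval A"
  shows "is_interval (reflect_if b ` A)"
proof -
  have "continuous_on A (reflect_if b)"
    by (simp add: reflect_if_def refl_def continuous_intros)
  then show ?thesis
    using assms by (simp add: is_interval_connected_1 connected_continuous_image)
qed

lemma nbhd_image_isometry:
  assumes "\<And>x y. \<bar>g x - g y\<bar> = \<bar>x - y\<bar>" and "A \<subseteq> nbhd \<epsilon> C"
  shows "g ` A \<subseteq> nbhd \<epsilon> (g ` C)"
  using assms unfolding nbhd_def by fastforce

text \<open>\<open>Pi_sheet N B False\<close> is the image of \<open>B \<inter> (C \<times> I)\<close>, on which \<open>\<Pi>\<close> does not reflect.\<close>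

definition Pi_sheet :: "nat \<Rightarrow> ((int \<Rightarrow> nat) \<times> real) set \<Rightarrow> bool \<Rightarrow> ((int \<Rightarrow> nat) \<times> real) set" where
  "Pi_sheet N B b = PiMap N ` {z \<in> B. (N < fst z 0) = b}"

lemma PiMap_eq: "PiMap N (\<omega>, x) = (proj N \<omega>, reflect_if (N < \<omega> 0) x)"
  by (simp add: PiMap_def cylC_def reflect_if_def)

lemma PiMap_image_eq_Pi_sheets: "PiMap N ` B = Pi_sheet N B False \<union> Pi_sheet N B True"
  unfolding Pi_sheet_def by blast

lemma Pi_sheet_subset:
  assumes "B \<subseteq> SigmaA N f \<times> unitI"
  shows "Pi_sheet N B b \<subseteq> SigmaN N \<times> unitI"
  using assms proj_SigmaN reflect_if_unitI by (fastforce simp: Pi_sheet_def PiMap_eq)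

lemma fiber_Pi_sheet:
  assumes cover: "IP N f \<union> IR N f = {1..N}"
    and B: "B \<subseteq> SigmaA N f \<times> unitI" and \<xi>: "\<xi> \<in> SigmaN N"
  shows "fiber (Pi_sheet N B b) \<xi> = reflect_if b ` fiber B (lift N (IR N f) b \<xi>)"
proof (intro set_eqI iffI)
  fix x
  assume "x \<in> fiber (Pi_sheet N B b) \<xi>"
  then obtain \<omega> y where \<omega>y: "(\<omega>, y) \<in> B" "(N < \<omega> 0) = b" "proj N \<omega> = \<xi>" "x = reflect_if b y"
    by (auto simp: fiber_def Pi_sheet_def PiMap_eq)
  have "\<omega> \<in> SigmaA N f"
    using B \<omega>y(1) by auto
  then have "lift N (IR N f) (N < \<omega> 0) (proj N \<omega>) = \<omega>"
    by (rule lift_proj[OF cover])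
  then have "lift N (IR N f) b \<xi> = \<omega>"
    using \<omega>y(2,3) by simp
  with \<omega>y show "x \<in> reflect_if b ` fiber B (lift N (IR N f) b \<xi>)"
    by (simp add: fiber_def)
next
  fix x
  assume "x \<in> reflect_if b ` fiber B (lift N (IR N f) b \<xi>)"
  then obtain y where y: "(lift N (IR N f) b \<xi>, y) \<in> B" "x = reflect_if b y"
    by (auto simp: fiber_def)
  have "(lift N (IR N f) b \<xi>, y) \<in> {z \<in> B. (N < fst z 0) = b}"
    using y(1) upper_lift_0[OF \<xi>] by simp
  moreover have "(\<xi>, x) = PiMap N (lift N (IR N f) b \<xi>, y)"
    using y(2) by (simp add: PiMap_eq proj_lift[OF \<xi>] upper_lift_0[OF \<xi>])
  ultimately show "x \<in> fiber (Pi_sheet N B b) \<xi>"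
    unfolding fiber_def Pi_sheet_def by (blast intro: rev_image_eqI)
qed

lemma bony_graph_Pi_sheet:
  assumes cover: "IP N f \<union> IR N f = {1..N}"
    and markov: "markov_measure (2 * N) (Amat N f) p P lam"
    and symmetric: "symmetric_markov N p P"
    and bony: "bony_graph (SigmaA N f) lam B"
  shows "bony_graph (SigmaN N) (distr lam borel (proj N)) (Pi_sheet N B b)"
proof -
  let ?l = "lift N (IR N f) b"
  have B: "B \<subseteq> SigmaA N f \<times> unitI"
    and fibers: "\<And>\<omega>. \<omega> \<in> SigmaA N f \<Longrightarrow> is_interval (fiber B \<omega>) \<and> fiber B \<omega> \<noteq> {}"
    using bony by (auto simp: bony_graph_def)
  note sheet_fiber = fiber_Pi_sheet[OF cover B]
  have "AE \<omega> in lam. \<omega> \<in> SigmaA N f \<longrightarrow> (\<exists>x. fiber B \<omega> = {x})"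
    using bony by (simp add: bony_graph_def)
  then obtain E where E: "{\<omega> \<in> space lam. \<not> (\<omega> \<in> SigmaA N f \<longrightarrow> (\<exists>x. fiber B \<omega> = {x}))} \<subseteq> E"
      "emeasure lam E = 0" "E \<in> sets lam"
    by (rule AE_E)
  have "AE \<xi> in distr lam borel (proj N). \<xi> \<in> SigmaN N \<longrightarrow> (\<exists>x. fiber (Pi_sheet N B b) \<xi> = {x})"
  proof (rule AE_I'[OF null_sets_distr_proj_lift[OF cover markov symmetric]])
    show "E \<in> null_sets lam"
      using E(2,3) by (simp add: null_sets_def)
    show "{\<xi> \<in> space (distr lam borel (proj N)). \<not> (\<xi> \<in> SigmaN N \<longrightarrow> (\<exists>x. fiber (Pi_sheet N B b) \<xi> = {x}))}
        \<subseteq> ?l -` E"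
    proof
      fix \<xi>
      assume "\<xi> \<in> {\<xi> \<in> space (distr lam borel (proj N)).
        \<not> (\<xi> \<in> SigmaN N \<longrightarrow> (\<exists>x. fiber (Pi_sheet N B b) \<xi> = {x}))}"
      then have "\<xi> \<in> SigmaN N" and "\<nexists>x. reflect_if b ` fiber B (?l \<xi>) = {x}"
        using sheet_fiber by auto
      then have "\<nexists>x. fiber B (?l \<xi>) = {x}"
        by auto
      then show "\<xi> \<in> ?l -` E"
        using E(1) lift_SigmaA[OF cover \<open>\<xi> \<in> SigmaN N\<close>] by (auto simp: space_markov[OF markov])
    qed
  qed
  moreover have "is_interval (fiber (Pi_sheet N B b) \<xi>) \<and> fiber (Pi_sheet N B b) \<xi> \<noteq> {}"
    if "\<xi> \<in> SigmaN N" for \<xi>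
    using sheet_fiber[OF that] fibers[OF lift_SigmaA[OF cover that]] is_interval_reflect_if_image
    by auto
  ultimately show ?thesis
    unfolding bony_graph_def using Pi_sheet_subset[OF B] by blast
qed

lemma lift_in_fst_image:
  assumes cover: "IP N f \<union> IR N f = {1..N}"
    and fibers: "\<forall>\<omega>\<in>SigmaA N f. fiber B \<omega> \<noteq> {}" and \<xi>: "\<xi> \<in> SigmaN N"
  shows "lift N (IR N f) b \<xi> \<in> fst ` B"
proof -
  obtain x where "(lift N (IR N f) b \<xi>, x) \<in> B"
    using fibers lift_SigmaA[OF cover \<xi>] unfolding fiber_def by blast
  then show ?thesis
    by (rule rev_image_eqI) simp
qed

lemma graph_continuous_Pi_sheet:
  assumes cover: "IP N f \<union> IR N f = {1..N}"
    and B: "B \<subseteq> SigmaA N f \<times> unitI" and fibers: "\<forall>\<omega>\<in>SigmaA N f. fiber B \<omega> \<noteq> {}"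
    and continuous: "graph_continuous B"
  shows "graph_continuous (Pi_sheet N B b)"
  unfolding graph_continuous_def
proof (intro ballI allI impI)
  fix \<xi> and \<epsilon> :: real
  assume \<xi>: "\<xi> \<in> fst ` Pi_sheet N B b" and "\<epsilon> > 0"
  let ?l = "lift N (IR N f) b"
  have domain: "\<eta> \<in> SigmaN N" if "\<eta> \<in> fst ` Pi_sheet N B b" for \<eta>
    using that Pi_sheet_subset[OF B, where b = b] by auto
  note lift_domain = lift_in_fst_image[OF cover fibers domain]
  obtain \<delta> where "\<delta> > 0"
    and \<delta>: "\<forall>\<eta>\<in>fst ` B. seq_dist \<eta> (?l \<xi>) < \<delta> \<longrightarrow> fiber B \<eta> \<subseteq> nbhd \<epsilon> (fiber B (?l \<xi>))"
    using continuous lift_domain[OF \<xi>] \<open>\<epsilon> > 0\<close> unfolding graph_continuous_def by blast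
  show "\<exists>\<delta>>0. \<forall>\<eta>\<in>fst ` Pi_sheet N B b. seq_dist \<eta> \<xi> < \<delta> \<longrightarrow>
      fiber (Pi_sheet N B b) \<eta> \<subseteq> nbhd \<epsilon> (fiber (Pi_sheet N B b) \<xi>)"
  proof (intro exI[of _ \<delta>] conjI ballI impI \<open>\<delta> > 0\<close>)
    fix \<eta>
    assume \<eta>: "\<eta> \<in> fst ` Pi_sheet N B b" and "seq_dist \<eta> \<xi> < \<delta>"
    then have "seq_dist (?l \<eta>) (?l \<xi>) < \<delta>"
      using seq_dist_lift[of N "IR N f" b \<eta> \<xi>] by linarith
    then have "fiber B (?l \<eta>) \<subseteq> nbhd \<epsilon> (fiber B (?l \<xi>))"
      using \<delta> lift_domain[OF \<eta>] by blast
    then show "fiber (Pi_sheet N B b) \<eta> \<subseteq> nbhd \<epsilon> (fiber (Pi_sheet N B b) \<xi>)"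
      using fiber_Pi_sheet[OF cover B] domain[OF \<eta>] domain[OF \<xi>]
        nbhd_image_isometry[OF reflect_if_isometry]
      by simp
  qed

qed

theorem lemma3p15:
  fixes N :: nat and f :: "nat \<Rightarrow> real \<Rightarrow> real"
    and p :: "nat \<Rightarrow> real" and P :: "nat \<Rightarrow> nat \<Rightarrow> real"
    and lam :: "(int \<Rightarrow> nat) measure" and B :: "((int \<Rightarrow> nat) \<times> real) set"
  assumes "N \<ge> 1"
    and "\<forall>i\<in>{1..N}. C1_diffeo_onto_image (f i)"
    and "markov_measure (2 * N) (Amat N f) p P lam"
    and "symmetric_markov N p P"
    and "bony_graph (SigmaA N f) lam B"
  shows "bi_bony_graph (SigmaN N) (distr lam borel (proj N)) (PiMap N ` B)
         \<and> (continuous_bony_graph (SigmaA N f) lam B \<longrightarrow>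
            continuous_bi_bony_graph (SigmaN N) (distr lam borel (proj N)) (PiMap N ` B))"
proof -
  have cover: "IP N f \<union> IR N f = {1..N}"
    using assms(2) by (rule IP_Un_IR)
  have bony: "bony_graph (SigmaN N) (distr lam borel (proj N)) (Pi_sheet N B b)" for b
    using bony_graph_Pi_sheet[OF cover assms(3-5)] .
  have "continuous_bony_graph (SigmaN N) (distr lam borel (proj N)) (Pi_sheet N B b)"
    if "continuous_bony_graph (SigmaA N f) lam B" for b
  proof -
    have "B \<subseteq> SigmaA N f \<times> unitI" "\<forall>\<omega>\<in>SigmaA N f. fiber B \<omega> \<noteq> {}" "graph_continuous B"
      using that unfolding continuous_bony_graph_def bony_graph_def by auto
    then show ?thesis
      unfolding continuous_bony_graph_def using bony graph_continuous_Pi_sheet[OF cover] by blast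
  qed
  then show ?thesis
    unfolding bi_bony_graph_def continuous_bi_bony_graph_def PiMap_image_eq_Pi_sheets
    using bony by (intro conjI impI exI[of _ "Pi_sheet N B False"] exI[of _ "Pi_sheet N B True"]) auto
qed

end
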